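(* Let $M$ be a set of goods, $v$ an additive valuation on $M$, $n$ a positive integer, $k<n$ a nonnegative integer, $S\subseteq M$ with $|S|=2k$, and $x\ge0$ such that $v(g)\le\mathrm{MMS}^n_v(M)/2+x$ for all $g\in S$. Then $\mathrm{MMS}^{n-k}_v(M\setminus S)\ge\mathrm{MMS}^n_v(M)-2x$.
   Context: $\mathrm{MMS}^d_v(T)$ is the maximum, over all partitions $(P_1,\dots,P_d)$ of $T$ into $d$ (possibly empty) bundles, of $\min_j v(P_j)$. *)

theory Defs
  imports Complex_Main
begin

text \<open>A partition of T into d (possibly empty) bundles is represented by an
assignment f mapping each good of T to a bundle index in {..<d}; bundle j is
{g \<in> T. f g = j}.\<close>

definition bundle_value :: "('a \<Rightarrow> real) \<Rightarrow> 'a set \<Rightarrow> ('a \<Rightarrow> nat) \<Rightarrow> nat \<Rightarrow> real" where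
  "bundle_value v T f j = sum v {g \<in> T. f g = j}"

definition MMS :: "('a \<Rightarrow> real) \<Rightarrow> nat \<Rightarrow> 'a set \<Rightarrow> real" where
  "MMS v d T = Max {Min ((bundle_value v T f) ` {..<d}) | f. f ` T \<subseteq> {..<d}}"

end

theory Submission
  imports Defs "HOL-Library.FuncSet"
begin

text \<open>Take a partition of M into n bundles, each worth at least \<mu> = MMS v n M, and
remove S.  Bundles that meet S in no good are still worth \<mu>; bundles that lose exactly
one good keep at least \<mu>/2 - x, so two of them together are worth \<mu> - 2x; bundles that
lose two or more goods are dumped into the others.  With z untouched bundles and h bundles
hit exactly once, the 2k removed goods force 2n \<le> 2k + 2z + h, hence z + h div 2 \<ge> n - k.\<close>

lemma finite_MMS_values:
  assumes "finite T"
  shows "finite {Min (bundle_value v T f ` {..<d}) | f. f ` T \<subseteq> {..<d}}"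
proof -
  let ?m = "\<lambda>f. Min (bundle_value v T f ` {..<d})"
  have "{?m f | f. f ` T \<subseteq> {..<d}} \<subseteq> ?m ` (T \<rightarrow>\<^sub>E {..<d})"
  proof
    fix y assume "y \<in> {?m f | f. f ` T \<subseteq> {..<d}}"
    then obtain f where f: "f ` T \<subseteq> {..<d}" "y = ?m f" by blast
    have "bundle_value v T (restrict f T) = bundle_value v T f"
      by (intro ext) (auto simp: bundle_value_def restrict_apply intro!: sum.cong)
    moreover have "restrict f T \<in> T \<rightarrow>\<^sub>E {..<d}" using f(1) by auto
    ultimately show "y \<in> ?m ` (T \<rightarrow>\<^sub>E {..<d})"
      using f(2) by (metis (no_types, lifting) image_eqI)
  qed
  moreover have "finite (T \<rightarrow>\<^sub>E {..<d})" using assms by (intro finite_PiE) auto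
  ultimately show ?thesis by (meson finite_imageI finite_subset)
qed

lemma MMS_ge_partition:
  assumes "finite T" "0 < d" "f ` T \<subseteq> {..<d}" "\<forall>j<d. c \<le> bundle_value v T f j"
  shows "c \<le> MMS v d T"
proof -
  have "c \<le> Min (bundle_value v T f ` {..<d})"
    using assms(2,4) by (subst Min_ge_iff) auto
  also have "\<dots> \<le> MMS v d T"
    unfolding MMS_def using assms(3) by (intro Max_ge[OF finite_MMS_values[OF assms(1)]]) blast
  finally show ?thesis .
qed

lemma MMS_partition_exists:
  assumes "finite T" "0 < d"
  obtains f where "f ` T \<subseteq> {..<d}" "\<forall>j<d. MMS v d T \<le> bundle_value v T f j"
proof -
  have "{Min (bundle_value v T f ` {..<d}) | f. f ` T \<subseteq> {..<d}} \<noteq> {}"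
    using assms(2) by (auto intro!: exI[of _ "\<lambda>_. 0"])
  then have "MMS v d T \<in> {Min (bundle_value v T f ` {..<d}) | f. f ` T \<subseteq> {..<d}}"
    unfolding MMS_def by (rule Max_in[OF finite_MMS_values[OF assms(1)]])
  then obtain f where f: "f ` T \<subseteq> {..<d}" "MMS v d T = Min (bundle_value v T f ` {..<d})"
    by blast
  show thesis
  proof (rule that[OF f(1)])
    show "\<forall>j<d. MMS v d T \<le> bundle_value v T f j"
      unfolding f(2) by (intro allI impI Min_le) auto
  qed
qed

lemma MMS_ge_bundles:
  assumes "finite T" "\<forall>g\<in>T. 0 \<le> v g" "0 < d" "d \<le> card J"
    and "\<forall>j\<in>J. c \<le> bundle_value v T f j"
  shows "c \<le> MMS v d T"
proof -
  from assms(3,4) have "finite J" by (meson card_ge_0_finite less_le_trans)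
  then obtain J0 where J0: "J0 \<subseteq> J" "card J0 = d" "finite J0"
    using obtain_subset_with_card_n[OF assms(4)] by (metis finite_subset)
  then obtain h where h: "bij_betw h J0 {..<d}"
    using ex_bij_betw_finite_nat by (metis atLeast0LessThan)
  define f' where "f' g = (if f g \<in> J0 then h (f g) else 0)" for g
  have "f' ` T \<subseteq> {..<d}"
    using h assms(3) by (auto simp: f'_def bij_betw_def)
  moreover have "c \<le> bundle_value v T f' j" if "j < d" for j
  proof -
    obtain a where a: "a \<in> J0" "h a = j"
      using h \<open>j < d\<close> by (metis bij_betw_imp_surj_on imageE lessThan_iff)
    have "c \<le> bundle_value v T f a" using assms(5) a(1) J0(1) by auto
    also have "\<dots> \<le> bundle_value v T f' j"
      unfolding bundle_value_def using assms(1,2) a by (intro sum_mono2) (auto simp: f'_def)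
    finally show ?thesis .
  qed
  ultimately show ?thesis using MMS_ge_partition[OF assms(1,3)] by blast
qed

lemma bundle_value_merge:
  assumes "finite T" "i \<noteq> i'"
  shows "bundle_value v T (\<lambda>g. if f g = i' then i else f g) i
    = bundle_value v T f i + bundle_value v T f i'"
proof -
  have "{g \<in> T. (if f g = i' then i else f g) = i} = {g \<in> T. f g = i} \<union> {g \<in> T. f g = i'}"
    using assms(2) by auto
  then show ?thesis
    unfolding bundle_value_def using assms by (simp add: sum.union_disjoint disjoint_iff)
qed

lemma bundle_value_merge_other:
  assumes "j \<noteq> i" "j \<noteq> i'"
  shows "bundle_value v T (\<lambda>g. if f g = i' then i else f g) j = bundle_value v T f j"
  unfolding bundle_value_def using assms by (intro arg_cong[where f = "sum v"]) auto

lemma pair_up_half_bundles: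
  assumes "finite T" "finite F" "finite H" "F \<inter> H = {}"
    and "\<forall>i\<in>F. c \<le> bundle_value v T f i" "\<forall>i\<in>H. c / 2 \<le> bundle_value v T f i"
  shows "\<exists>f' J. card J = card F + card H div 2 \<and> (\<forall>j\<in>J. c \<le> bundle_value v T f' j)"
  using assms(2-)
proof (induction "card H" arbitrary: F H f rule: less_induct)
  case less
  show ?case
  proof (cases "card H \<le> 1")
    case True
    then show ?thesis using less.prems(4) by (intro exI[of _ f] exI[of _ F]) auto
  next
    case False
    then obtain i i' where ii: "i \<in> H" "i' \<in> H" "i \<noteq> i'"
      using card_le_Suc0_iff_eq[OF less.prems(2)] by auto
    define f' where "f' g = (if f g = i' then i else f g)" for g
    let ?H = "H - {i, i'}"
    have card_H: "card ?H = card H - 2" using ii less.prems(2) by (simp add: card_Diff_subset)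
    have "\<forall>j\<in>insert i F. c \<le> bundle_value v T f' j"
    proof
      fix j assume "j \<in> insert i F"
      then consider "j = i" | "j \<in> F" "j \<noteq> i" "j \<noteq> i'" using ii less.prems(3) by blast
      then show "c \<le> bundle_value v T f' j"
      proof cases
        case 1
        have "c / 2 \<le> bundle_value v T f i" "c / 2 \<le> bundle_value v T f i'"
          using less.prems(5) ii(1,2) by auto
        then have "c \<le> bundle_value v T f i + bundle_value v T f i'" by linarith
        then show ?thesis unfolding 1 f'_def bundle_value_merge[OF assms(1) ii(3)] .
      next
        case 2
        then show ?thesis unfolding f'_def using bundle_value_merge_other less.prems(4) by metis
      qed
    qed
    moreover have "\<forall>j\<in>?H. c / 2 \<le> bundle_value v T f' j"
      unfolding f'_def using bundle_value_merge_other less.prems(5) by (metis DiffE insertCI)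
    moreover have "card ?H < card H" using card_H False by simp
    ultimately obtain f'' J where J: "card J = card (insert i F) + card ?H div 2"
        "\<forall>j\<in>J. c \<le> bundle_value v T f'' j"
      using less.hyps[of ?H "insert i F" f'] less.prems(1-3) by blast
    moreover have "card (insert i F) = card F + 1"
      using ii(1) less.prems(1,3) by (metis Suc_eq_plus1 card_insert_disjoint disjoint_iff)
    ultimately show ?thesis using card_H False by (intro exI[of _ f''] exI[of _ J]) auto
  qed
qed

lemma double_le_sum_add_count_zero_one:
  fixes c :: "nat \<Rightarrow> nat"
  shows "2 * n \<le> (\<Sum>i<n. c i) + 2 * card {i. i < n \<and> c i = 0} + card {i. i < n \<and> c i = 1}"
proof -
  have "2 * n = (\<Sum>i<n. 2::nat)" by simp
  also have "\<dots> \<le> (\<Sum>i<n. c i + 2 * of_bool (c i = 0) + of_bool (c i = 1))"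
    by (intro sum_mono) auto
  also have "\<dots> = (\<Sum>i<n. c i) + 2 * card ({..<n} \<inter> {i. c i = 0})
      + card ({..<n} \<inter> {i. c i = 1})"
    by (simp add: sum.distrib sum_distrib_left[symmetric])
  also have "\<dots> = (\<Sum>i<n. c i) + 2 * card {i. i < n \<and> c i = 0} + card {i. i < n \<and> c i = 1}"
    by (simp add: Int_def)
  finally show ?thesis .
qed

lemma sum_card_fibres:
  assumes "finite A" "finite B" "f ` A \<subseteq> B"
  shows "(\<Sum>b\<in>B. card {a \<in> A. f a = b}) = card A"
  unfolding card_eq_sum using sum.group[OF assms, where h = "\<lambda>_. 1::nat"] by simp

lemma bundle_value_Diff_untouched:
  assumes "finite S" "card {g \<in> S. f g = i} = 0"
  shows "bundle_value v (T - S) f i = bundle_value v T f i"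
proof -
  have "{g \<in> S. f g = i} = {}" using assms by simp
  then have "{g \<in> T - S. f g = i} = {g \<in> T. f g = i}" by blast
  then show ?thesis unfolding bundle_value_def by simp
qed

lemma bundle_value_Diff_hit_once:
  assumes "finite T" "S \<subseteq> T" "card {g \<in> S. f g = i} = 1" "\<forall>g\<in>S. v g \<le> b"
  shows "bundle_value v T f i - b \<le> bundle_value v (T - S) f i"
proof -
  obtain s where s: "{g \<in> S. f g = i} = {s}"
    using assms(3) by (metis One_nat_def card_1_singleton_iff)
  then have "{g \<in> T. f g = i} = insert s {g \<in> T - S. f g = i}" "s \<notin> {g \<in> T - S. f g = i}"
    using assms(2) by blast+
  then have "bundle_value v T f i = v s + bundle_value v (T - S) f i"
    unfolding bundle_value_def using assms(1) by simp
  moreover have "v s \<le> b" using s assms(4) by blast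
  ultimately show ?thesis by simp
qed

theorem lemma32:
  fixes M S :: "'a set" and v :: "'a \<Rightarrow> real" and n k :: nat and x :: real
  assumes "finite M"
    and "\<forall>g\<in>M. v g \<ge> 0"
    and "n > 0" and "k < n"
    and "S \<subseteq> M" and "card S = 2 * k"
    and "x \<ge> 0"
    and "\<forall>g\<in>S. v g \<le> MMS v n M / 2 + x"
  shows "MMS v (n - k) (M - S) \<ge> MMS v n M - 2 * x"
proof -
  define \<mu> where "\<mu> = MMS v n M"
  obtain f where f: "f ` M \<subseteq> {..<n}" "\<forall>i<n. \<mu> \<le> bundle_value v M f i"
    using MMS_partition_exists[OF assms(1,3)] unfolding \<mu>_def by blast
  define c where "c i = card {g \<in> S. f g = i}" for i
  define F where "F = {i. i < n \<and> c i = 0}"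
  define H where "H = {i. i < n \<and> c i = 1}"
  have "finite S" using assms(1,5) finite_subset by blast
  have untouched: "\<forall>i\<in>F. \<mu> - 2 * x \<le> bundle_value v (M - S) f i"
    using bundle_value_Diff_untouched[OF \<open>finite S\<close>] f(2) assms(7) by (auto simp: F_def c_def)
  have hit_once: "\<forall>i\<in>H. (\<mu> - 2 * x) / 2 \<le> bundle_value v (M - S) f i"
  proof
    fix i assume "i \<in> H"
    then have "bundle_value v M f i - (\<mu> / 2 + x) \<le> bundle_value v (M - S) f i" "i < n"
      using bundle_value_Diff_hit_once[OF assms(1,5)] assms(8) by (auto simp: H_def c_def \<mu>_def)
    then show "(\<mu> - 2 * x) / 2 \<le> bundle_value v (M - S) f i" using f(2) by fastforce
  qed
  have "finite F" "finite H" "F \<inter> H = {}" by (auto simp: F_def H_def)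
  then obtain f' J where J: "card J = card F + card H div 2"
      "\<forall>j\<in>J. \<mu> - 2 * x \<le> bundle_value v (M - S) f' j"
    using pair_up_half_bundles[OF _ _ _ _ untouched hit_once] assms(1) by blast
  have "(\<Sum>i<n. c i) = card S"
    unfolding c_def using sum_card_fibres[OF \<open>finite S\<close> finite_lessThan] f(1) assms(5) by blast
  then have "n - k \<le> card J"
    using double_le_sum_add_count_zero_one[of n c] J(1) assms(4,6) by (simp add: F_def H_def)
  then show ?thesis
    using MMS_ge_bundles[OF _ _ _ _ J(2)] assms(1,2,4) unfolding \<mu>_def by auto
qed

end
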